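(* Assume in addition that $\mathbb{X}_f$ contains an open neighborhood of the origin and that $\mathbb{X}$ is compact. Suppose there is a class $\mathcal{K}_\infty$ function $\alpha$ such that, for every $N\in\{0,1,\ldots,M\}$, $V^0_N(x)\le\alpha(|x|)$ for all $x\in\mathbb{X}_f$. Then there is a class $\mathcal{K}_\infty$ function $\beta$ such that $V(x)\le\beta(|x|)$ for all $x\in\mathbb{X}$.
   Context: Consider the discrete-time controlled system $x^+=f(x,u)$ with state $x\in\mathbb{R}^{n}$ and control $u\in\mathbb{R}^{m}$, constraint sets $\mathbb{X}\subset\mathbb{R}^n$, $\mathbb{U}\subset\mathbb{R}^m$, $\mathbb{Y}\subset\mathbb{R}^p$, and a constraint function $h(x,u)\in\mathbb{R}^p$. A control $u$ is feasible at $x\in\mathbb{X}$ if $u\in\mathbb{U}$, $f(x,u)\in\mathbb{X}$ and $h(x,u)\in\mathbb{Y}$. A control sequence $(u(0),\ldots,u(N-1))$ is feasible from $x$ if, for the state sequence defined by $x(0)=x$ and $x(k+1)=f(x(k),u(k))$, each $u(k)$ is feasible at $x(k)$. We are given a stage cost $l(x,u)$, a terminal set $\mathbb{X}_f$ and a terminal cost $V_f$ defined on $\mathbb{X}_f$. Horizon-$N$ problem at $x$: minimize $\sum_{k=0}^{N-1}l(x(k),u(k))+V_f(x(N))$ over control sequences that are feasible from $x$ and satisfy $x(N)\in\mathbb{X}_f$. Let $V_N^0(x)$ be its minimum value, which is assumed to be attained whenever the feasible set is nonempty. For $N=0$, $V_0^0(x)=V_f(x)$ for $x\in\mathbb{X}_f$.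 Standing assumptions: (A1) $f,l,h,V_f$ are continuous on an open set containing $\mathbb{X}\times\mathbb{U}$ (for $V_f$, an open set containing $\mathbb{X}_f$). The stage cost $l$ is nonnegative definite in $(x,u)$ and positive definite in $u$. $V_f$ is positive definite on $\mathbb{X}_f$. Moreover $f(0,0)=0$, $l(0,0)=0$ and $V_f(0)=0$. (A2) $\mathbb{X}$ and $\mathbb{X}_f$ are closed, $\mathbb{X}_f\subset\mathbb{X}$, $\mathbb{U}$ is compact, and $\mathbb{X},\mathbb{X}_f,\mathbb{U}$ each contain a neighborhood of the origin. (A3) For every $x\in\mathbb{X}_f$ there is a control $u$ feasible at $x$ with $f(x,u)\in\mathbb{X}_f$ and $l(x,u)+V_f(f(x,u))\le V_f(x)$. (A4) For every $x\in\mathbb{X}$ there exist an integer $N\ge0$ and a feasible control sequence of length $N$ from $x$ whose state sequence satisfies $x(N)\in\mathbb{X}_f$. For $x\in\mathbb{X}$, $N(x)$ denotes the minimum such $N$. (A5) There is an integer $M\ge 0$ with $N(x)\le M$ for all $x\in\mathbb{X}$. (A6) There are class $\mathcal{K}_\infty$ functions $\alpha_1,\alpha_2$ with $l(x,u)\ge\alpha_1(|x|)$ for all $x\in\mathbb{X}$, $u\in\mathbb{U}$, and $V_f(x)\le\alpha_2(|x|)$ for all $x\in\mathbb{X}_f$. Define $V(x)=V^0_{N(x)}(x)$ for $x\in\mathbb{X}$. *)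

theory Defs
  imports "HOL-Analysis.Analysis"
begin

definition classKinf :: "(real \<Rightarrow> real) \<Rightarrow> bool" where
  "classKinf \<alpha> \<longleftrightarrow> continuous_on {0..} \<alpha> \<and> \<alpha> 0 = 0 \<and> strict_mono_on {0..} \<alpha>
     \<and> filterlim \<alpha> at_top at_top"

fun traj :: "('a \<Rightarrow> 'b \<Rightarrow> 'a) \<Rightarrow> 'a \<Rightarrow> (nat \<Rightarrow> 'b) \<Rightarrow> nat \<Rightarrow> 'a" where
  "traj f x us 0 = x"
| "traj f x us (Suc k) = f (traj f x us k) (us k)"

definition feasible_ctrl ::
  "('a \<Rightarrow> 'b \<Rightarrow> 'a) \<Rightarrow> ('a \<Rightarrow> 'b \<Rightarrow> 'c) \<Rightarrow> 'a set \<Rightarrow> 'b set \<Rightarrow> 'c set \<Rightarrow> 'a \<Rightarrow> 'b \<Rightarrow> bool" where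
  "feasible_ctrl f h X U Y x u \<longleftrightarrow> u \<in> U \<and> f x u \<in> X \<and> h x u \<in> Y"

text \<open>Control sequence of length N (only us 0, ..., us (N-1) matter) feasible from x.\<close>
definition feasible_seq ::
  "('a \<Rightarrow> 'b \<Rightarrow> 'a) \<Rightarrow> ('a \<Rightarrow> 'b \<Rightarrow> 'c) \<Rightarrow> 'a set \<Rightarrow> 'b set \<Rightarrow> 'c set \<Rightarrow> nat \<Rightarrow> 'a \<Rightarrow> (nat \<Rightarrow> 'b) \<Rightarrow> bool" where
  "feasible_seq f h X U Y N x us \<longleftrightarrow> (\<forall>k<N. feasible_ctrl f h X U Y (traj f x us k) (us k))"

definition admissible ::
  "('a \<Rightarrow> 'b \<Rightarrow> 'a) \<Rightarrow> ('a \<Rightarrow> 'b \<Rightarrow> 'c) \<Rightarrow> 'a set \<Rightarrow> 'b set \<Rightarrow> 'c set \<Rightarrow> 'a set \<Rightarrow> nat \<Rightarrow> 'a \<Rightarrow> (nat \<Rightarrow> 'b) \<Rightarrow> bool" where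
  "admissible f h X U Y Xf N x us \<longleftrightarrow> feasible_seq f h X U Y N x us \<and> traj f x us N \<in> Xf"

definition cost ::
  "('a \<Rightarrow> 'b \<Rightarrow> 'a) \<Rightarrow> ('a \<Rightarrow> 'b \<Rightarrow> real) \<Rightarrow> ('a \<Rightarrow> real) \<Rightarrow> nat \<Rightarrow> 'a \<Rightarrow> (nat \<Rightarrow> 'b) \<Rightarrow> real" where
  "cost f l Vf N x us = (\<Sum>k<N. l (traj f x us k) (us k)) + Vf (traj f x us N)"

text \<open>Optimal value V_N^0(x) (the minimum, assumed attained, is the infimum).\<close>
definition VN0 ::
  "('a \<Rightarrow> 'b \<Rightarrow> 'a) \<Rightarrow> ('a \<Rightarrow> 'b \<Rightarrow> 'c) \<Rightarrow> 'a set \<Rightarrow> 'b set \<Rightarrow> 'c set \<Rightarrow> 'a set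
     \<Rightarrow> ('a \<Rightarrow> 'b \<Rightarrow> real) \<Rightarrow> ('a \<Rightarrow> real) \<Rightarrow> nat \<Rightarrow> 'a \<Rightarrow> real" where
  "VN0 f h X U Y Xf l Vf N x = Inf {cost f l Vf N x us | us. admissible f h X U Y Xf N x us}"

definition Nmin ::
  "('a \<Rightarrow> 'b \<Rightarrow> 'a) \<Rightarrow> ('a \<Rightarrow> 'b \<Rightarrow> 'c) \<Rightarrow> 'a set \<Rightarrow> 'b set \<Rightarrow> 'c set \<Rightarrow> 'a set \<Rightarrow> 'a \<Rightarrow> nat" where
  "Nmin f h X U Y Xf x = (LEAST N. \<exists>us. admissible f h X U Y Xf N x us)"

definition Vfun ::
  "('a \<Rightarrow> 'b \<Rightarrow> 'a) \<Rightarrow> ('a \<Rightarrow> 'b \<Rightarrow> 'c) \<Rightarrow> 'a set \<Rightarrow> 'b set \<Rightarrow> 'c set \<Rightarrow> 'a set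
     \<Rightarrow> ('a \<Rightarrow> 'b \<Rightarrow> real) \<Rightarrow> ('a \<Rightarrow> real) \<Rightarrow> 'a \<Rightarrow> real" where
  "Vfun f h X U Y Xf l Vf x = VN0 f h X U Y Xf l Vf (Nmin f h X U Y Xf x) x"

end

theory Submission
  imports Defs
begin

text \<open>Outside the terminal set the state is bounded away from the origin, say by \<open>r\<close>, while \<open>V\<close> is
  bounded on the compact set \<open>\<bbbX>\<close> by some \<open>C\<close>, because every admissible cost has at most \<open>M\<close>
  stage costs, each bounded on the compact set \<open>\<bbbX> \<times> \<bbbU>\<close>. Inside the terminal set \<open>N(x) = 0\<close>, so
  \<open>V \<le> \<alpha>\<close> there. Hence \<open>\<beta> = max 1 (C / \<alpha> r) \<cdot> \<alpha>\<close> works.\<close>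

lemma classKinf_nonneg:
  assumes "classKinf \<alpha>" "s \<ge> 0"
  shows "\<alpha> s \<ge> 0"
  using assms unfolding classKinf_def
  by (metis atLeast_iff order_refl less_eq_real_def strict_mono_onD)

lemma classKinf_mono:
  assumes "classKinf \<alpha>" "0 \<le> s" "s \<le> t"
  shows "\<alpha> s \<le> \<alpha> t"
  using assms unfolding classKinf_def
  by (metis atLeast_iff order_trans less_eq_real_def strict_mono_onD)

lemma classKinf_pos:
  assumes "classKinf \<alpha>" "s > 0"
  shows "\<alpha> s > 0"
  using assms unfolding classKinf_def
  by (metis atLeast_iff order_refl less_eq_real_def strict_mono_onD)

lemma classKinf_scale:
  assumes "classKinf \<alpha>" "c > 0"
  shows "classKinf (\<lambda>s. c * \<alpha> s)"
proof -
  have \<alpha>: "continuous_on {0..} \<alpha>" "\<alpha> 0 = 0" "strict_mono_on {0..} \<alpha>" "filterlim \<alpha> at_top at_top"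
    using assms(1) unfolding classKinf_def by auto
  show ?thesis
    unfolding classKinf_def
  proof (intro conjI)
    show "continuous_on {0..} (\<lambda>s. c * \<alpha> s)"
      using \<alpha>(1) by (intro continuous_intros)
    show "strict_mono_on {0..} (\<lambda>s. c * \<alpha> s)"
      using \<alpha>(3) assms(2) unfolding strict_mono_on_def by auto
    show "filterlim (\<lambda>s. c * \<alpha> s) at_top at_top"
      using filterlim_tendsto_pos_mult_at_top[OF tendsto_const assms(2) \<alpha>(4)] .
  qed (use \<alpha>(2) in simp)
qed

lemma classKinf_bound_from_local_and_global:
  fixes V :: "'a::real_normed_vector \<Rightarrow> real"
  assumes "classKinf \<alpha>" "r > 0"
    and local: "\<And>x. x \<in> X \<Longrightarrow> norm x < r \<Longrightarrow> V x \<le> \<alpha> (norm x)"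
    and global: "\<And>x. x \<in> X \<Longrightarrow> V x \<le> C"
  shows "\<exists>\<beta>. classKinf \<beta> \<and> (\<forall>x\<in>X. V x \<le> \<beta> (norm x))"
proof -
  define k where "k = max 1 (C / \<alpha> r)"
  have k: "k \<ge> 1" unfolding k_def by simp
  have "\<alpha> r > 0" using classKinf_pos assms(1,2) .
  then have Ck: "C \<le> k * \<alpha> r"
    unfolding k_def by (smt (verit) divide_le_eq max.cobounded2 mult_right_mono)
  have bound: "V x \<le> k * \<alpha> (norm x)" if x: "x \<in> X" for x
  proof (cases "norm x < r")
    case True
    have "\<alpha> (norm x) \<le> k * \<alpha> (norm x)"
      using mult_right_mono[OF k classKinf_nonneg[OF assms(1) norm_ge_zero]] by simp
    then show ?thesis using local[OF x True] by linarith
  next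
    case False
    then have "\<alpha> r \<le> \<alpha> (norm x)"
      using classKinf_mono[OF assms(1), of r "norm x"] assms(2) by linarith
    then have "k * \<alpha> r \<le> k * \<alpha> (norm x)"
      using k by simp
    then show ?thesis using global[OF x] Ck by linarith
  qed
  have "classKinf (\<lambda>s. k * \<alpha> s)"
    using classKinf_scale[OF assms(1)] k by simp
  then show ?thesis using bound by blast
qed

lemma continuous_on_compact_bounded_above:
  fixes g :: "'a::topological_space \<Rightarrow> real"
  assumes "compact K" "continuous_on K g"
  shows "\<exists>B\<ge>0. \<forall>x\<in>K. g x \<le> B"
proof -
  obtain B where B: "B > 0" "\<forall>y\<in>g ` K. norm y \<le> B"
    using compact_imp_bounded[OF compact_continuous_image[OF assms(2,1)]] bounded_pos by metis
  have "g x \<le> B" if "x \<in> K" for x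
    using B(2) that by (auto simp: abs_le_iff)
  then show ?thesis using B(1) by (intro exI[of _ B]) auto
qed

lemma traj_in_state_set:
  assumes "feasible_seq f h X U Y N x us" "x \<in> X" "k \<le> N"
  shows "traj f x us k \<in> X"
  using assms(3)
proof (induction k)
  case (Suc k)
  then have "feasible_ctrl f h X U Y (traj f x us k) (us k)"
    using assms(1) unfolding feasible_seq_def by simp
  then show ?case unfolding feasible_ctrl_def by simp
qed (use assms(2) in simp)

lemma cost_le_horizon_bound:
  assumes adm: "admissible f h X U Y Xf N x us" and x: "x \<in> X" and "N \<le> M" "L \<ge> 0"
    and l_le: "\<And>x u. x \<in> X \<Longrightarrow> u \<in> U \<Longrightarrow> l x u \<le> L"
    and Vf_le: "\<And>x. x \<in> Xf \<Longrightarrow> Vf x \<le> B"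
  shows "cost f l Vf N x us \<le> real M * L + B"
proof -
  have feas: "feasible_seq f h X U Y N x us" "traj f x us N \<in> Xf"
    using adm unfolding admissible_def by auto
  have "(\<Sum>k<N. l (traj f x us k) (us k)) \<le> (\<Sum>k<N. L)"
  proof (rule sum_mono)
    fix k assume "k \<in> {..<N}"
    then have "us k \<in> U" "traj f x us k \<in> X"
      using feas(1) traj_in_state_set[OF feas(1) x, of k]
      unfolding feasible_seq_def feasible_ctrl_def by auto
    then show "l (traj f x us k) (us k) \<le> L" using l_le by blast
  qed
  also have "\<dots> \<le> real M * L"
    using \<open>N \<le> M\<close> \<open>L \<ge> 0\<close> by (simp add: mult_right_mono)
  finally show ?thesis
    using Vf_le[OF feas(2)] unfolding cost_def by linarith
qed

lemma VN0_eq_cost_of_minimizer: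
  assumes "admissible f h X U Y Xf N x us"
    and "\<forall>vs. admissible f h X U Y Xf N x vs \<longrightarrow> cost f l Vf N x us \<le> cost f l Vf N x vs"
  shows "VN0 f h X U Y Xf l Vf N x = cost f l Vf N x us"
  unfolding VN0_def by (rule cInf_eq_minimum) (use assms in auto)

lemma admissible_at_Nmin:
  assumes "\<exists>N us. admissible f h X U Y Xf N x us"
  shows "\<exists>us. admissible f h X U Y Xf (Nmin f h X U Y Xf x) x us"
  unfolding Nmin_def using LeastI_ex[OF assms] .

lemma Nmin_terminal:
  assumes "x \<in> Xf"
  shows "Nmin f h X U Y Xf x = 0"
proof -
  have "admissible f h X U Y Xf 0 x us" for us
    using assms unfolding admissible_def feasible_seq_def by simp
  then show ?thesis unfolding Nmin_def by (metis (mono_tags) Least_eq_0)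
qed

lemma Vfun_le_horizon_bound:
  assumes attained: "\<forall>N x. (\<exists>us. admissible f h X U Y Xf N x us) \<longrightarrow>
               (\<exists>us. admissible f h X U Y Xf N x us \<and>
                  (\<forall>vs. admissible f h X U Y Xf N x vs \<longrightarrow> cost f l Vf N x us \<le> cost f l Vf N x vs))"
    and x: "x \<in> X" and reach: "\<exists>N us. admissible f h X U Y Xf N x us"
    and "Nmin f h X U Y Xf x \<le> M" "L \<ge> 0"
    and "\<And>x u. x \<in> X \<Longrightarrow> u \<in> U \<Longrightarrow> l x u \<le> L"
    and "\<And>x. x \<in> Xf \<Longrightarrow> Vf x \<le> B"
  shows "Vfun f h X U Y Xf l Vf x \<le> real M * L + B"
proof -
  let ?N = "Nmin f h X U Y Xf x"
  obtain us where us: "admissible f h X U Y Xf ?N x us"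
    "\<forall>vs. admissible f h X U Y Xf ?N x vs \<longrightarrow> cost f l Vf ?N x us \<le> cost f l Vf ?N x vs"
    using attained admissible_at_Nmin[OF reach] by blast
  have "cost f l Vf ?N x us \<le> real M * L + B"
    using cost_le_horizon_bound[OF us(1) x] assms(4-) by blast
  then show ?thesis
    unfolding Vfun_def VN0_eq_cost_of_minimizer[OF us] .
qed

theorem proposition3:
  fixes f :: "'a::euclidean_space \<Rightarrow> 'b::euclidean_space \<Rightarrow> 'a"
    and h :: "'a \<Rightarrow> 'b \<Rightarrow> 'c::euclidean_space"
    and l :: "'a \<Rightarrow> 'b \<Rightarrow> real"
    and Vf :: "'a \<Rightarrow> real"
    and X Xf :: "'a set" and U :: "'b set" and Y :: "'c set"
    and M :: nat and \<alpha> :: "real \<Rightarrow> real"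
  assumes A1_f: "\<exists>W. open W \<and> X \<times> U \<subseteq> W \<and> continuous_on W (\<lambda>(x, u). f x u)"
    and A1_l: "\<exists>W. open W \<and> X \<times> U \<subseteq> W \<and> continuous_on W (\<lambda>(x, u). l x u)"
    and A1_h: "\<exists>W. open W \<and> X \<times> U \<subseteq> W \<and> continuous_on W (\<lambda>(x, u). h x u)"
    and A1_Vf: "\<exists>W. open W \<and> Xf \<subseteq> W \<and> continuous_on W Vf"
    and A1_l_nonneg: "\<forall>x\<in>X. \<forall>u\<in>U. l x u \<ge> 0"
    and A1_l_posdef_u: "\<forall>x\<in>X. \<forall>u\<in>U. u \<noteq> 0 \<longrightarrow> l x u > 0"
    and A1_Vf_posdef: "\<forall>x\<in>Xf. x \<noteq> 0 \<longrightarrow> Vf x > 0"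
    and A1_zero: "f 0 0 = 0" "l 0 0 = 0" "Vf 0 = 0"
    and A2: "closed X" "closed Xf" "Xf \<subseteq> X" "compact U"
            "0 \<in> interior X" "0 \<in> interior Xf" "0 \<in> interior U"
    and A3: "\<forall>x\<in>Xf. \<exists>u. feasible_ctrl f h X U Y x u \<and> f x u \<in> Xf \<and> l x u + Vf (f x u) \<le> Vf x"
    and A4: "\<forall>x\<in>X. \<exists>N us. admissible f h X U Y Xf N x us"
    and A5: "\<forall>x\<in>X. Nmin f h X U Y Xf x \<le> M"
    and A6: "\<exists>\<alpha>1 \<alpha>2. classKinf \<alpha>1 \<and> classKinf \<alpha>2 \<and>
               (\<forall>x\<in>X. \<forall>u\<in>U. l x u \<ge> \<alpha>1 (norm x)) \<and> (\<forall>x\<in>Xf. Vf x \<le> \<alpha>2 (norm x))"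
    and attained: "\<forall>N x. (\<exists>us. admissible f h X U Y Xf N x us) \<longrightarrow>
               (\<exists>us. admissible f h X U Y Xf N x us \<and>
                  (\<forall>vs. admissible f h X U Y Xf N x vs \<longrightarrow> cost f l Vf N x us \<le> cost f l Vf N x vs))"
    and Xf_nbhd: "\<exists>S. open S \<and> 0 \<in> S \<and> S \<subseteq> Xf"
    and X_compact: "compact X"
    and alpha: "classKinf \<alpha>"
    and bound: "\<forall>N\<le>M. \<forall>x\<in>Xf. VN0 f h X U Y Xf l Vf N x \<le> \<alpha> (norm x)"
  shows "\<exists>\<beta>. classKinf \<beta> \<and> (\<forall>x\<in>X. Vfun f h X U Y Xf l Vf x \<le> \<beta> (norm x))"
proof -
  obtain Wl where Wl: "X \<times> U \<subseteq> Wl" "continuous_on Wl (\<lambda>(x, u). l x u)"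
    using A1_l by blast
  obtain L where L: "L \<ge> 0" "\<forall>p\<in>X \<times> U. (\<lambda>(x, u). l x u) p \<le> L"
    using continuous_on_compact_bounded_above[OF compact_Times[OF X_compact A2(4)]
        continuous_on_subset[OF Wl(2,1)]] by (elim exE conjE)
  obtain Wv where Wv: "Xf \<subseteq> Wv" "continuous_on Wv Vf"
    using A1_Vf by blast
  have "compact Xf"
    using compact_Int_closed[OF X_compact A2(2)] A2(3) by (simp add: Int_absorb1)
  then obtain B where B: "\<forall>x\<in>Xf. Vf x \<le> B"
    using continuous_on_compact_bounded_above continuous_on_subset[OF Wv(2,1)] by blast
  have V_bounded: "Vfun f h X U Y Xf l Vf x \<le> real M * L + B" if "x \<in> X" for x
    by (rule Vfun_le_horizon_bound[OF attained that]) (use A4 A5 L B that in auto)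
  obtain S where S: "open S" "0 \<in> S" "S \<subseteq> Xf"
    using Xf_nbhd by blast
  obtain r where r: "r > 0" "ball 0 r \<subseteq> S"
    using openE[OF S(1,2)] .
  have ball_Xf: "ball 0 r \<subseteq> Xf"
    using r(2) S(3) by (rule order_trans)
  have "Vfun f h X U Y Xf l Vf x \<le> \<alpha> (norm x)" if "norm x < r" for x
  proof -
    have "x \<in> Xf" using that ball_Xf by auto
    then show ?thesis
      using bound unfolding Vfun_def Nmin_terminal[OF \<open>x \<in> Xf\<close>] by simp
  qed
  then show ?thesis
    using classKinf_bound_from_local_and_global[OF alpha r(1)] V_bounded by blast
qed

end
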